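(* Let $m\ge1$, let $\mathcal{X},\mathcal{A}_1,\dots,\mathcal{A}_m$ be finite sets with $|\mathcal{X}|=d\ge2$, and let $P$ be a probability distribution on $\mathcal{X}\times\mathcal{A}_1\times\cdots\times\mathcal{A}_m$. Let $Q$ be an $m$-partite no-signalling correlation with outputs in $\mathcal{X}^m$ and inputs in $\mathcal{A}_1\times\cdots\times\mathcal{A}_m$ such that $Q(x,\dots,x|a_1,\dots,a_m)\le 1/d$ for all $x\in\mathcal{X}$ and all $a_i\in\mathcal{A}_i$. Then $$\sum_{x,a_1,\dots,a_m}P(x,a_1,\dots,a_m)Q(x,\dots,x|a_1,\dots,a_m)\le\omega_{\mathrm{c}},$$ where $\omega_{\mathrm{c}}=\max_{f_1,\dots,f_m}\sum_{x,a_1,\dots,a_m}P(x,a_1,\dots,a_m)\,\delta[f_1(a_1)=\cdots=f_m(a_m)=x]$ over functions $f_i\colon\mathcal{A}_i\to\mathcal{X}$.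
   Context: $\delta$ is the indicator function. An $m$-partite no-signalling correlation is a conditional distribution $Q(x_1,\dots,x_m|a_1,\dots,a_m)$ on $\mathcal{X}^m$ given $(a_1,\dots,a_m)$ such that for every index set $I\subset\{1,\dots,m\}$ with complement $J$, $\sum_{x_J}Q(x_I,x_J|a_I,a_J)$ does not depend on $a_J$ (for all fixed $x_I,a_I$). *)

theory Defs
  imports Complex_Main "HOL-Library.FuncSet"
begin

text \<open>Inputs: a tuple (a_1,...,a_m) is a function in PiE {..<m} A, where A i is the
 input set of party i. Outputs: a tuple (x_1,...,x_m) is a function in PiE {..<m} (\<lambda>_. X).\<close>

definition cond_distr :: "nat \<Rightarrow> 'x set \<Rightarrow> (nat \<Rightarrow> 'a set) \<Rightarrow> ((nat \<Rightarrow> 'x) \<Rightarrow> (nat \<Rightarrow> 'a) \<Rightarrow> real) \<Rightarrow> bool" where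
  "cond_distr m X A Q \<longleftrightarrow>
     (\<forall>a\<in>PiE {..<m} A. (\<forall>x\<in>PiE {..<m} (\<lambda>_. X). Q x a \<ge> 0) \<and>
        (\<Sum>x\<in>PiE {..<m} (\<lambda>_. X). Q x a) = 1)"

definition no_signalling :: "nat \<Rightarrow> 'x set \<Rightarrow> (nat \<Rightarrow> 'a set) \<Rightarrow> ((nat \<Rightarrow> 'x) \<Rightarrow> (nat \<Rightarrow> 'a) \<Rightarrow> real) \<Rightarrow> bool" where
  "no_signalling m X A Q \<longleftrightarrow> cond_distr m X A Q \<and>
     (\<forall>I \<subseteq> {..<m}. \<forall>xI \<in> PiE I (\<lambda>_. X). \<forall>a\<in>PiE {..<m} A. \<forall>a'\<in>PiE {..<m} A.
        (\<forall>i\<in>I. a i = a' i) \<longrightarrow>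
        (\<Sum>xJ\<in>PiE ({..<m} - I) (\<lambda>_. X). Q (\<lambda>i. if i \<in> I then xI i else xJ i) a) =
        (\<Sum>xJ\<in>PiE ({..<m} - I) (\<lambda>_. X). Q (\<lambda>i. if i \<in> I then xI i else xJ i) a'))"

definition prob_distr :: "nat \<Rightarrow> 'x set \<Rightarrow> (nat \<Rightarrow> 'a set) \<Rightarrow> ('x \<Rightarrow> (nat \<Rightarrow> 'a) \<Rightarrow> real) \<Rightarrow> bool" where
  "prob_distr m X A P \<longleftrightarrow>
     (\<forall>x\<in>X. \<forall>a\<in>PiE {..<m} A. P x a \<ge> 0) \<and>
     (\<Sum>x\<in>X. \<Sum>a\<in>PiE {..<m} A. P x a) = 1"

definition omega_c :: "nat \<Rightarrow> 'x set \<Rightarrow> (nat \<Rightarrow> 'a set) \<Rightarrow> ('x \<Rightarrow> (nat \<Rightarrow> 'a) \<Rightarrow> real) \<Rightarrow> real" where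
  "omega_c m X A P = Max ((\<lambda>f. \<Sum>x\<in>X. \<Sum>a\<in>PiE {..<m} A.
        P x a * (if \<forall>i<m. f i (a i) = x then 1 else 0))
      ` PiE {..<m} (\<lambda>i. A i \<rightarrow>\<^sub>E X))"

end

theory Submission
  imports Defs
begin

text \<open>Since \<open>Q(x,\<dots>,x|a) \<le> 1/d\<close>, the left-hand
side is at most \<open>1/d\<close>. On the other hand some \<open>x\<^sub>0\<close> has marginal probability
\<open>P(x\<^sub>0) \<ge> 1/d\<close>, and the constant strategies \<open>f\<^sub>i = x\<^sub>0\<close> win with exactly that probability,
so \<open>\<omega>\<^sub>c \<ge> 1/d\<close>.\<close>

definition strategy_value ::
    "nat \<Rightarrow> 'x set \<Rightarrow> (nat \<Rightarrow> 'a set) \<Rightarrow> ('x \<Rightarrow> (nat \<Rightarrow> 'a) \<Rightarrow> real) \<Rightarrow> (nat \<Rightarrow> 'a \<Rightarrow> 'x) \<Rightarrow> real"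
  where "strategy_value m X A P f =
    (\<Sum>x\<in>X. \<Sum>a\<in>PiE {..<m} A. P x a * (if \<forall>i<m. f i (a i) = x then 1 else 0))"

lemma omega_c_eq_Max_strategy_value:
  "omega_c m X A P = Max (strategy_value m X A P ` PiE {..<m} (\<lambda>i. A i \<rightarrow>\<^sub>E X))"
  unfolding omega_c_def strategy_value_def ..

lemma strategy_value_le_omega_c:
  assumes "finite X" "\<forall>i<m. finite (A i)" "f \<in> PiE {..<m} (\<lambda>i. A i \<rightarrow>\<^sub>E X)"
  shows "strategy_value m X A P f \<le> omega_c m X A P"
proof -
  have "finite (PiE {..<m} (\<lambda>i. A i \<rightarrow>\<^sub>E X))"
    using assms(1,2) by (intro finite_PiE) (auto intro: finite_PiE)
  then show ?thesis
    unfolding omega_c_eq_Max_strategy_value using assms(3) by simp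
qed

lemma strategy_value_const:
  assumes "m \<ge> 1" "x\<^sub>0 \<in> X" "finite X"
  shows "strategy_value m X A P (\<lambda>_ _. x\<^sub>0) = (\<Sum>a\<in>PiE {..<m} A. P x\<^sub>0 a)"
proof -
  have "(\<forall>i<m. x\<^sub>0 = x) \<longleftrightarrow> x = x\<^sub>0" for x
    using assms(1) by (metis One_nat_def Suc_le_lessD)
  then have "strategy_value m X A P (\<lambda>_ _. x\<^sub>0) =
      (\<Sum>x\<in>X. if x = x\<^sub>0 then (\<Sum>a\<in>PiE {..<m} A. P x a) else 0)"
    unfolding strategy_value_def by (intro sum.cong) auto
  also have "\<dots> = (\<Sum>a\<in>PiE {..<m} A. P x\<^sub>0 a)"
    using assms(2,3) by simp
  finally show ?thesis .
qed

lemma strategy_value_restrict: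
  "strategy_value m X A P (\<lambda>i\<in>{..<m}. \<lambda>y\<in>A i. f i y) = strategy_value m X A P f"
  unfolding strategy_value_def by (intro sum.cong refl) (auto simp: PiE_iff)

lemma exists_ge_average:
  fixes f :: "'b \<Rightarrow> real"
  assumes "finite S" "S \<noteq> {}"
  shows "\<exists>x\<in>S. sum f S / card S \<le> f x"
proof -
  have "Max (f ` S) \<in> f ` S"
    using assms by simp
  then obtain x where x: "x \<in> S" "f x = Max (f ` S)"
    by (metis imageE)
  have "sum f S \<le> card S * f x"
    using sum_bounded_above[of S f "f x"] x(2) assms(1) by simp
  moreover have "card S > 0"
    using assms by (simp add: card_gt_0_iff)
  ultimately show ?thesis
    using x(1) by (auto simp: pos_divide_le_eq mult.commute)
qed

lemma omega_c_ge_inverse_card: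
  assumes "m \<ge> 1" "finite X" "X \<noteq> {}" "\<forall>i<m. finite (A i)" "prob_distr m X A P"
  shows "1 / card X \<le> omega_c m X A P"
proof -
  have "(\<Sum>x\<in>X. \<Sum>a\<in>PiE {..<m} A. P x a) = 1"
    using assms(5) unfolding prob_distr_def by blast
  then obtain x\<^sub>0 where x\<^sub>0: "x\<^sub>0 \<in> X" "1 / card X \<le> (\<Sum>a\<in>PiE {..<m} A. P x\<^sub>0 a)"
    using exists_ge_average[OF assms(2,3), of "\<lambda>x. \<Sum>a\<in>PiE {..<m} A. P x a"] by auto
  have "(\<lambda>i\<in>{..<m}. \<lambda>y\<in>A i. x\<^sub>0) \<in> PiE {..<m} (\<lambda>i. A i \<rightarrow>\<^sub>E X)"
    using x\<^sub>0(1) by auto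
  then have "strategy_value m X A P (\<lambda>i\<in>{..<m}. \<lambda>y\<in>A i. x\<^sub>0) \<le> omega_c m X A P"
    by (rule strategy_value_le_omega_c[OF assms(2,4)])
  then show ?thesis
    using x\<^sub>0 strategy_value_const[OF assms(1) x\<^sub>0(1) assms(2), of A P]
    by (simp add: strategy_value_restrict)
qed

lemma winning_probability_le:
  assumes "prob_distr m X A P"
    and "\<forall>x\<in>X. \<forall>a\<in>PiE {..<m} A. Q (restrict (\<lambda>_. x) {..<m}) a \<le> c"
  shows "(\<Sum>x\<in>X. \<Sum>a\<in>PiE {..<m} A. P x a * Q (restrict (\<lambda>_. x) {..<m}) a) \<le> c"
proof -
  have "(\<Sum>x\<in>X. \<Sum>a\<in>PiE {..<m} A. P x a * Q (restrict (\<lambda>_. x) {..<m}) a)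
      \<le> (\<Sum>x\<in>X. \<Sum>a\<in>PiE {..<m} A. P x a * c)"
    using assms unfolding prob_distr_def by (intro sum_mono mult_left_mono) auto
  also have "\<dots> = c"
    using assms(1) unfolding prob_distr_def by (simp add: sum_distrib_right[symmetric])
  finally show ?thesis .
qed

theorem mainTheorem9:
  fixes m :: nat and X :: "'x set" and A :: "nat \<Rightarrow> 'a set"
    and P :: "'x \<Rightarrow> (nat \<Rightarrow> 'a) \<Rightarrow> real"
    and Q :: "(nat \<Rightarrow> 'x) \<Rightarrow> (nat \<Rightarrow> 'a) \<Rightarrow> real"
  assumes "m \<ge> 1"
    and "finite X" and "card X \<ge> 2"
    and "\<forall>i<m. finite (A i)"
    and "prob_distr m X A P"
    and "no_signalling m X A Q"
    and "\<forall>x\<in>X. \<forall>a\<in>PiE {..<m} A. Q (restrict (\<lambda>_. x) {..<m}) a \<le> 1 / real (card X)"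
  shows "(\<Sum>x\<in>X. \<Sum>a\<in>PiE {..<m} A. P x a * Q (restrict (\<lambda>_. x) {..<m}) a)
           \<le> omega_c m X A P"
proof -
  have "X \<noteq> {}"
    using assms(3) by auto
  have "(\<Sum>x\<in>X. \<Sum>a\<in>PiE {..<m} A. P x a * Q (restrict (\<lambda>_. x) {..<m}) a) \<le> 1 / card X"
    using assms(5,7) by (rule winning_probability_le)
  also have "\<dots> \<le> omega_c m X A P"
    using assms(1,2) \<open>X \<noteq> {}\<close> assms(4,5) by (rule omega_c_ge_inverse_card)
  finally show ?thesis .
qed

end
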